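(* $$D_{\mathbb{R},3}\ge\frac{12^{2/3}}{5/2}\approx2.096.$$ This is witnessed by the $3$-homogeneous polynomial $P_3:\ell_\infty^6\to\mathbb{R}$, $P_3(x)=(x_1+x_2)(x_3^2+x_3x_4-x_4^2)+(x_1-x_2)(x_5^2+x_5x_6-x_6^2)$, which has $\|P_3\|=5/2$ and twelve nonzero coefficients, all of modulus $1$.
   Context: $\ell_\infty^n$ is $\mathbb{R}^n$ with the sup norm; for a polynomial $P$ on $\ell_\infty^n$, $\|P\|=\sup_{x\in[-1,1]^n}|P(x)|$. $D_{\mathbb{R},m}$ is the smallest constant $D$ such that for every $N$ and every real $m$-homogeneous polynomial $P(x)=\sum_{|\alpha|=m}a_\alpha x^\alpha$ on $\ell_\infty^N$, $\big(\sum_{|\alpha|=m}|a_\alpha|^{\frac{2m}{m+1}}\big)^{\frac{m+1}{2m}}\le D\|P\|$. *)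

theory Defs
  imports Complex_Main
begin

text \<open>Real m-homogeneous polynomials on ell_infty^N, represented by their coefficient
  families a indexed by multi-indices alpha (functions nat => nat supported in {0..<N})
  with |alpha| = m.  Variables are x 0, ..., x (N-1).\<close>

definition multi_idx :: "nat \<Rightarrow> nat \<Rightarrow> (nat \<Rightarrow> nat) set" where
  "multi_idx N m = {\<alpha>. (\<forall>i. N \<le> i \<longrightarrow> \<alpha> i = 0) \<and> (\<Sum>i<N. \<alpha> i) = m}"

definition hpoly_eval :: "nat \<Rightarrow> nat \<Rightarrow> ((nat \<Rightarrow> nat) \<Rightarrow> real) \<Rightarrow> (nat \<Rightarrow> real) \<Rightarrow> real" where
  "hpoly_eval N m a x = (\<Sum>\<alpha>\<in>multi_idx N m. a \<alpha> * (\<Prod>i<N. x i ^ \<alpha> i))"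

definition unit_cube :: "nat \<Rightarrow> (nat \<Rightarrow> real) set" where
  "unit_cube N = {x. \<forall>i<N. \<bar>x i\<bar> \<le> 1}"

definition hpoly_norm :: "nat \<Rightarrow> nat \<Rightarrow> ((nat \<Rightarrow> nat) \<Rightarrow> real) \<Rightarrow> real" where
  "hpoly_norm N m a = (SUP x\<in>unit_cube N. \<bar>hpoly_eval N m a x\<bar>)"

definition BH_admissible :: "nat \<Rightarrow> real \<Rightarrow> bool" where
  "BH_admissible m D \<longleftrightarrow>
     (\<forall>N a. (\<Sum>\<alpha>\<in>multi_idx N m. \<bar>a \<alpha>\<bar> powr (2 * real m / (real m + 1)))
               powr ((real m + 1) / (2 * real m)) \<le> D * hpoly_norm N m a)"

definition D_R :: "nat \<Rightarrow> real" where
  "D_R m = Inf {D. BH_admissible m D}"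

definition P3 :: "(nat \<Rightarrow> real) \<Rightarrow> real" where
  "P3 x = (x 0 + x 1) * (x 2 ^ 2 + x 2 * x 3 - x 3 ^ 2)
        + (x 0 - x 1) * (x 4 ^ 2 + x 4 * x 5 - x 5 ^ 2)"

end

theory Submission
  imports Defs "HOL-Library.Multiset"
begin

text \<open>Idea: any coefficient family a with k nonzero coefficients, all of modulus one, and sup
  norm c on the cube turns the Bohnenblust--Hille inequality into
  k^((m+1)/(2m)) <= D * c, so every admissible D is at least k^((m+1)/(2m)) / c.
  The polynomial P3 has k = 12 such coefficients, m = 3 and c = 5/2.\<close>

definition mono_exp :: "nat list \<Rightarrow> nat \<Rightarrow> nat" where
  "mono_exp vs = count_list vs"

lemma finite_multi_idx: "finite (multi_idx N m)"
proof (rule finite_subset)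
  show "multi_idx N m \<subseteq> {\<alpha>. \<forall>i. (i \<in> {..<N} \<longrightarrow> \<alpha> i \<in> {..m}) \<and> (i \<notin> {..<N} \<longrightarrow> \<alpha> i = 0)}"
  proof (intro subsetI CollectI allI conjI impI)
    fix \<alpha> i assume "\<alpha> \<in> multi_idx N m"
    then show "i \<in> {..<N} \<Longrightarrow> \<alpha> i \<in> {..m}" "i \<notin> {..<N} \<Longrightarrow> \<alpha> i = 0"
      unfolding multi_idx_def using member_le_sum[of i "{..<N}" \<alpha>] by auto
  qed
qed (rule finite_set_of_finite_funs; simp)

lemma mono_exp_in_multi_idx:
  assumes "set vs \<subseteq> {..<N}" shows "mono_exp vs \<in> multi_idx N (length vs)"
proof -
  have "(\<Sum>i<N. count_list vs i) = length vs" using assms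
  proof (induction vs)
    case (Cons v vs)
    have "(\<Sum>i<N. count_list (v # vs) i) = (\<Sum>i<N. (if v = i then 1 else 0) + count_list vs i)"
      by (rule sum.cong) auto
    then show ?case using Cons by (simp add: sum.distrib)
  qed simp
  moreover have "count_list vs i = 0" if "N \<le> i" for i
    using assms that by (auto simp: count_list_0_iff)
  ultimately show ?thesis by (auto simp: multi_idx_def mono_exp_def)
qed

lemma prod_mono_exp:
  fixes x :: "nat \<Rightarrow> real"
  assumes "set vs \<subseteq> {..<N}" shows "(\<Prod>i<N. x i ^ mono_exp vs i) = prod_list (map x vs)"
  using assms
proof (induction vs)
  case (Cons v vs)
  have "(\<Prod>i<N. x i ^ mono_exp (v # vs) i) = (\<Prod>i<N. (if i = v then x i else 1) * x i ^ mono_exp vs i)"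
    by (rule prod.cong) (auto simp: mono_exp_def)
  also have "\<dots> = x v * (\<Prod>i<N. x i ^ mono_exp vs i)"
    using Cons.prems by (simp add: prod.distrib)
  finally show ?case using Cons by simp
qed (simp add: mono_exp_def)

text \<open>Sorted words with the same exponent vector coincide (they have the same multiset).\<close>
lemma mono_exp_inj:
  assumes "sorted vs" "sorted ws" "mono_exp vs = mono_exp ws" shows "vs = ws"
proof -
  have "mset vs = mset ws" using assms(3) by (simp add: multiset_eq_iff count_mset mono_exp_def)
  then have "sort ws = vs" using assms(1) by (rule properties_for_sort)
  then show ?thesis using assms(2) by (simp add: sorted_sort_id)
qed

text \<open>Sorted lists of m variable indices below N; each encodes one monomial of
  degree m in N variables, and distinct such lists encode distinct monomials.\<close>
definition monomial_words :: "nat \<Rightarrow> nat \<Rightarrow> nat list set" where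
  "monomial_words N m = {vs. sorted vs \<and> set vs \<subseteq> {..<N} \<and> length vs = m}"

definition sparse_coeffs :: "nat list set \<Rightarrow> (nat list \<Rightarrow> real) \<Rightarrow> (nat \<Rightarrow> nat) \<Rightarrow> real" where
  "sparse_coeffs V c \<alpha> = (\<Sum>vs\<in>V. if mono_exp vs = \<alpha> then c vs else 0)"

lemma hpoly_eval_sparse:
  assumes "finite V" "V \<subseteq> monomial_words N m"
  shows "hpoly_eval N m (sparse_coeffs V c) x = (\<Sum>vs\<in>V. c vs * prod_list (map x vs))"
proof -
  let ?mon = "\<lambda>\<alpha>. \<Prod>i<N. x i ^ \<alpha> i"
  have word: "set vs \<subseteq> {..<N}" "mono_exp vs \<in> multi_idx N m" if "vs \<in> V" for vs
    using assms(2) that mono_exp_in_multi_idx[of vs N] by (auto simp: monomial_words_def)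
  have "hpoly_eval N m (sparse_coeffs V c) x
      = (\<Sum>vs\<in>V. \<Sum>\<alpha>\<in>multi_idx N m. if mono_exp vs = \<alpha> then c vs * ?mon \<alpha> else 0)"
    unfolding hpoly_eval_def sparse_coeffs_def sum_distrib_right
    by (subst sum.swap) (auto intro!: sum.cong)
  also have "\<dots> = (\<Sum>vs\<in>V. c vs * ?mon (mono_exp vs))"
    by (rule sum.cong) (simp_all add: finite_multi_idx word)
  also have "\<dots> = (\<Sum>vs\<in>V. c vs * prod_list (map x vs))"
    by (rule sum.cong) (simp_all add: prod_mono_exp word)
  finally show ?thesis .
qed

lemma sparse_coeffs_word:
  assumes "finite V" "V \<subseteq> monomial_words N m" "vs \<in> V"
  shows "sparse_coeffs V c (mono_exp vs) = c vs"
proof -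
  have "mono_exp ws = mono_exp vs \<longleftrightarrow> ws = vs" if "ws \<in> V" for ws
    using assms(2,3) that mono_exp_inj by (auto simp: monomial_words_def subset_iff)
  then show ?thesis
    unfolding sparse_coeffs_def using assms(1,3) by (simp cong: sum.cong)
qed

lemma sparse_coeffs_support:
  assumes "finite V" "V \<subseteq> monomial_words N m"
  shows "{\<alpha>\<in>multi_idx N m. sparse_coeffs V c \<alpha> \<noteq> 0} = mono_exp ` {vs\<in>V. c vs \<noteq> 0}"
proof (intro equalityI subsetI)
  fix \<alpha> assume \<alpha>: "\<alpha> \<in> {\<alpha>\<in>multi_idx N m. sparse_coeffs V c \<alpha> \<noteq> 0}"
  have "\<alpha> \<in> mono_exp ` V"
  proof (rule ccontr)
    assume "\<alpha> \<notin> mono_exp ` V"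
    then have "sparse_coeffs V c \<alpha> = 0"
      unfolding sparse_coeffs_def by (intro sum.neutral) auto
    with \<alpha> show False by simp
  qed
  then obtain vs where "vs \<in> V" "\<alpha> = mono_exp vs" by blast
  with \<alpha> sparse_coeffs_word[OF assms] show "\<alpha> \<in> mono_exp ` {vs\<in>V. c vs \<noteq> 0}" by auto
next
  fix \<alpha> assume "\<alpha> \<in> mono_exp ` {vs\<in>V. c vs \<noteq> 0}"
  then obtain vs where vs: "vs \<in> V" "c vs \<noteq> 0" "\<alpha> = mono_exp vs" by blast
  then have "mono_exp vs \<in> multi_idx N m"
    using assms(2) mono_exp_in_multi_idx[of vs N] by (auto simp: monomial_words_def)
  with vs sparse_coeffs_word[OF assms] show "\<alpha> \<in> {\<alpha>\<in>multi_idx N m. sparse_coeffs V c \<alpha> \<noteq> 0}"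
    by simp
qed

lemma card_sparse_coeffs_support:
  assumes "finite V" "V \<subseteq> monomial_words N m"
  shows "card {\<alpha>\<in>multi_idx N m. sparse_coeffs V c \<alpha> \<noteq> 0} = card {vs\<in>V. c vs \<noteq> 0}"
proof -
  have "inj_on mono_exp V"
    using assms(2) mono_exp_inj by (auto intro!: inj_onI simp: monomial_words_def subset_iff)
  then show ?thesis
    unfolding sparse_coeffs_support[OF assms] by (auto intro: card_image inj_on_subset)
qed

lemma sparse_coeffs_unimodular:
  assumes "finite V" "V \<subseteq> monomial_words N m" "\<And>vs. vs \<in> V \<Longrightarrow> \<bar>c vs\<bar> = 1"
  shows "\<forall>\<alpha>\<in>multi_idx N m. sparse_coeffs V c \<alpha> \<noteq> 0 \<longrightarrow> \<bar>sparse_coeffs V c \<alpha>\<bar> = 1"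
proof (intro ballI impI)
  fix \<alpha> assume "\<alpha> \<in> multi_idx N m" "sparse_coeffs V c \<alpha> \<noteq> 0"
  then obtain vs where "vs \<in> V" "\<alpha> = mono_exp vs"
    using sparse_coeffs_support[OF assms(1,2), of c] by blast
  then show "\<bar>sparse_coeffs V c \<alpha>\<bar> = 1"
    using sparse_coeffs_word[OF assms(1,2)] assms(3) by simp
qed

lemma hpoly_norm_eqI:
  assumes "\<And>x. x \<in> unit_cube N \<Longrightarrow> \<bar>hpoly_eval N m a x\<bar> \<le> c"
    and "w \<in> unit_cube N" "\<bar>hpoly_eval N m a w\<bar> = c"
  shows "hpoly_norm N m a = c"
  unfolding hpoly_norm_def
  by (rule cSup_eq_maximum) (use assms in \<open>auto intro!: image_eqI[where x=w]\<close>)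

lemma BH_lower_bound_unimodular:
  assumes "BH_admissible m D"
    and "\<forall>\<alpha>\<in>multi_idx N m. a \<alpha> \<noteq> 0 \<longrightarrow> \<bar>a \<alpha>\<bar> = 1"
    and "card {\<alpha>\<in>multi_idx N m. a \<alpha> \<noteq> 0} = k"
    and "hpoly_norm N m a = c" "c > 0"
  shows "real k powr ((real m + 1) / (2 * real m)) / c \<le> D"
proof -
  let ?p = "2 * real m / (real m + 1)"
  have "(\<Sum>\<alpha>\<in>multi_idx N m. \<bar>a \<alpha>\<bar> powr ?p) = (\<Sum>\<alpha>\<in>multi_idx N m. if a \<alpha> \<noteq> 0 then 1 else 0)"
    by (rule sum.cong) (use assms(2) in auto)
  also have "\<dots> = real k"
    using assms(3) by (simp add: sum.If_cases finite_multi_idx Int_def)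
  finally have "real k powr ((real m + 1) / (2 * real m)) \<le> D * c"
    using assms(1,4) unfolding BH_admissible_def by metis
  then show ?thesis using assms(5) by (simp add: divide_le_eq)
qed

definition P3_words :: "nat list set" where
  "P3_words = {[0,2,2], [0,2,3], [0,3,3], [1,2,2], [1,2,3], [1,3,3],
               [0,4,4], [0,4,5], [0,5,5], [1,4,4], [1,4,5], [1,5,5]}"

definition P3_sign :: "nat list \<Rightarrow> real" where
  "P3_sign vs = (if vs \<in> {[0,3,3], [1,3,3], [0,5,5], [1,4,4], [1,4,5]} then -1 else 1)"

lemma P3_words_monomial: "P3_words \<subseteq> monomial_words 6 3"
  by (simp add: P3_words_def monomial_words_def)

lemma P3_words_finite: "finite P3_words"
  by (simp add: P3_words_def)

lemma hpoly_eval_P3: "hpoly_eval 6 3 (sparse_coeffs P3_words P3_sign) x = P3 x"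
  by (simp add: hpoly_eval_sparse[OF P3_words_finite P3_words_monomial])
     (simp add: P3_words_def P3_sign_def P3_def algebra_simps power2_eq_square)

text \<open>The quadratic form s^2 + st - t^2 is bounded by 5/4 on the square [-1,1]^2,
  by two completions of squares.\<close>
lemma quadratic_bound:
  fixes s t :: real assumes "\<bar>s\<bar> \<le> 1" "\<bar>t\<bar> \<le> 1"
  shows "\<bar>s^2 + s*t - t^2\<bar> \<le> 5/4"
proof -
  have "s^2 \<le> 1" "t^2 \<le> 1" using assms by (simp_all add: abs_square_le_1)
  moreover have "(t - s/2)^2 = t^2 - s*t + s^2/4" "(s + t/2)^2 = s^2 + s*t + t^2/4"
    by (simp_all add: power2_eq_square algebra_simps)
  moreover have "0 \<le> (t - s/2)^2" "0 \<le> (s + t/2)^2" by simp_all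
  ultimately show ?thesis unfolding abs_le_iff by linarith
qed

text \<open>|a + b| + |a - b| = 2 max |a| |b| is at most 2 on the square.\<close>
lemma abs_sum_diff_bound:
  fixes a b :: real assumes "\<bar>a\<bar> \<le> 1" "\<bar>b\<bar> \<le> 1"
  shows "\<bar>a + b\<bar> + \<bar>a - b\<bar> \<le> 2"
  using assms by (cases "0 \<le> a + b"; cases "0 \<le> a - b") (simp_all add: abs_le_iff)

text \<open>Hence |P3| <= (|x0 + x1| + |x0 - x1|) * 5/4 <= 5/2 on the cube.\<close>
lemma P3_bound: assumes "x \<in> unit_cube 6" shows "\<bar>P3 x\<bar> \<le> 5/2"
proof -
  have c: "\<bar>x i\<bar> \<le> 1" if "i < 6" for i using assms that by (simp add: unit_cube_def)
  let ?A = "x 2 ^ 2 + x 2 * x 3 - x 3 ^ 2" and ?B = "x 4 ^ 2 + x 4 * x 5 - x 5 ^ 2"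
  have A: "\<bar>?A\<bar> \<le> 5/4" and B: "\<bar>?B\<bar> \<le> 5/4" by (rule quadratic_bound; simp add: c)+
  have "\<bar>P3 x\<bar> \<le> \<bar>x 0 + x 1\<bar> * \<bar>?A\<bar> + \<bar>x 0 - x 1\<bar> * \<bar>?B\<bar>"
    unfolding P3_def abs_mult[symmetric] by (rule abs_triangle_ineq)
  also have "\<dots> \<le> (\<bar>x 0 + x 1\<bar> + \<bar>x 0 - x 1\<bar>) * (5/4)"
    using mult_left_mono[OF A, of "\<bar>x 0 + x 1\<bar>"] mult_left_mono[OF B, of "\<bar>x 0 - x 1\<bar>"]
    by (simp add: algebra_simps)
  also have "\<dots> \<le> 5/2" using abs_sum_diff_bound[of "x 0" "x 1"] by (simp add: c)
  finally show ?thesis .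
qed

text \<open>The bound 5/2 is attained at x = (1, 0, 1, 1/2, 1, 1/2).\<close>
lemma hpoly_norm_P3: "hpoly_norm 6 3 (sparse_coeffs P3_words P3_sign) = 5/2"
proof (rule hpoly_norm_eqI)
  let ?w = "\<lambda>i::nat. if i = 1 then 0 else if i = 3 \<or> i = 5 then 1/2 else (1::real)"
  show "?w \<in> unit_cube 6" by (simp add: unit_cube_def)
  show "\<bar>hpoly_eval 6 3 (sparse_coeffs P3_words P3_sign) ?w\<bar> = 5/2"
    by (simp add: hpoly_eval_P3 P3_def power2_eq_square)
qed (unfold hpoly_eval_P3, rule P3_bound)

lemma card_support_P3: "card {\<alpha>\<in>multi_idx 6 3. sparse_coeffs P3_words P3_sign \<alpha> \<noteq> 0} = 12"
proof -
  have "{vs\<in>P3_words. P3_sign vs \<noteq> 0} = P3_words" by (auto simp: P3_sign_def)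
  then show ?thesis
    by (simp add: card_sparse_coeffs_support[OF P3_words_finite P3_words_monomial])
       (simp add: P3_words_def)
qed

lemma unimodular_P3:
  "\<forall>\<alpha>\<in>multi_idx 6 3. sparse_coeffs P3_words P3_sign \<alpha> \<noteq> 0
     \<longrightarrow> \<bar>sparse_coeffs P3_words P3_sign \<alpha>\<bar> = 1"
  by (rule sparse_coeffs_unimodular[OF P3_words_finite P3_words_monomial])
     (simp add: P3_sign_def)

theorem mainTheorem8:
  shows "(\<forall>D. BH_admissible 3 D \<longrightarrow> 12 powr (2/3) / (5/2) \<le> D)
    \<and> (\<exists>a. (\<forall>x. hpoly_eval 6 3 a x = P3 x)
          \<and> hpoly_norm 6 3 a = 5/2
          \<and> card {\<alpha>\<in>multi_idx 6 3. a \<alpha> \<noteq> 0} = 12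
          \<and> (\<forall>\<alpha>\<in>multi_idx 6 3. a \<alpha> \<noteq> 0 \<longrightarrow> \<bar>a \<alpha>\<bar> = 1))"
proof (intro conjI allI impI exI)
  fix D assume "BH_admissible 3 D"
  from BH_lower_bound_unimodular[OF this unimodular_P3 card_support_P3 hpoly_norm_P3]
  show "12 powr (2/3) / (5/2) \<le> D" by simp
qed (use hpoly_eval_P3 hpoly_norm_P3 card_support_P3 unimodular_P3 in auto)

end
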